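(* Let $V$ be a finite set. Let $\mathcal{E}:=\{\hat X\in\mathbb{S}^{\{0\}\cup V}_+ : \hat X_{ii}=1\ \forall i\in\{0\}\cup V\}$, $\mathcal{E}':=\{\hat X\in\mathcal{E} : (e_0+e_i)^{\mathsf T}\hat X(e_0+e_j)\ge 0\ \forall ij\in\binom{V}{2}\}$, and $\mathcal{E}'':=\{\hat X\in\mathcal{E} : (e_0-e_i)^{\mathsf T}\hat X(e_0-e_j)\ge 0\ \forall ij\in\binom{V}{2}\}$. Let $\hat{\mathcal{C}}\in\{\mathcal{E},\mathcal{E}',\mathcal{E}''\}$. Then a point $\hat X$ of $\hat{\mathcal{C}}$ is a vertex of $\hat{\mathcal{C}}$ if and only if $\operatorname{rank}(\hat X)=1$. Thus the vertices of $\hat{\mathcal{C}}$ are precisely the matrices $(1\oplus x_S)(1\oplus x_S)^{\mathsf T}$ where $x_S=\chi^S-\chi^{V\setminus S}$ for some $S\subseteq V$.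
   Context: $0$ is a new index not in $V$; $\mathbb{S}^{W}_+$ denotes real symmetric positive semidefinite matrices indexed by $W$, with trace inner product; $e_i$ are standard basis vectors of $\mathbb{R}^{\{0\}\cup V}$. $\chi^S\in\{0,1\}^V$ is the incidence vector of $S$; $1\oplus x\in\mathbb{R}^{\{0\}\cup V}$ has $0$-entry $1$. For a convex set $\mathcal{C}$ in a finite-dimensional space $\mathbb{E}$ and $\bar x\in\mathcal{C}$, the normal cone is $N_{\mathcal{C}}(\bar x):=\{c : \langle c,x\rangle\le\langle c,\bar x\rangle\ \forall x\in\mathcal{C}\}$; $\bar x$ is a vertex if $\dim N_{\mathcal{C}}(\bar x)=\dim\mathbb{E}$. *)

theory Defs
  imports "HOL-Analysis.Analysis"
begin

(* Index set {0} \<union> V is the finite type 'n; the element z plays the role of 0,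
   and V = UNIV - {z}. *)

definition ebas :: "'n::finite \<Rightarrow> real^'n" where
  "ebas i = axis i 1"

definition sym_mats :: "(real^'n^'n) set" where
  "sym_mats = {A. transpose A = A}"

definition psd :: "real^'n^'n \<Rightarrow> bool" where
  "psd A \<longleftrightarrow> transpose A = A \<and> (\<forall>x. 0 \<le> x \<bullet> (A *v x))"

definition elliptope :: "(real^'n::finite^'n) set" where
  "elliptope = {X. psd X \<and> (\<forall>i. X $ i $ i = 1)}"

definition elliptope' :: "'n::finite \<Rightarrow> (real^'n^'n) set" where
  "elliptope' z = {X \<in> elliptope. \<forall>i j. i \<noteq> z \<longrightarrow> j \<noteq> z \<longrightarrow> i \<noteq> j \<longrightarrow>
      0 \<le> (ebas z + ebas i) \<bullet> (X *v (ebas z + ebas j))}"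

definition elliptope'' :: "'n::finite \<Rightarrow> (real^'n^'n) set" where
  "elliptope'' z = {X \<in> elliptope. \<forall>i j. i \<noteq> z \<longrightarrow> j \<noteq> z \<longrightarrow> i \<noteq> j \<longrightarrow>
      0 \<le> (ebas z - ebas i) \<bullet> (X *v (ebas z - ebas j))}"

definition normal_cone :: "(real^'n::finite^'n) set \<Rightarrow> real^'n^'n \<Rightarrow> (real^'n^'n) set" where
  "normal_cone C X = {A \<in> sym_mats. \<forall>Y\<in>C. trace (A ** Y) \<le> trace (A ** X)}"

definition is_vertex :: "(real^'n::finite^'n) set \<Rightarrow> real^'n^'n \<Rightarrow> bool" where
  "is_vertex C X \<longleftrightarrow> X \<in> C \<and> aff_dim (normal_cone C X) = aff_dim (sym_mats :: (real^'n^'n) set)"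

(* 1 \<oplus> x_S with x_S = \<chi>^S - \<chi>^{V\S}, as a vector indexed by {0} \<union> V *)
definition lift_xS :: "'n::finite \<Rightarrow> 'n set \<Rightarrow> real^'n" where
  "lift_xS z S = (\<chi> i. if i = z then 1 else if i \<in> S then 1 else -1)"

definition outer :: "real^'n::finite \<Rightarrow> real^'n^'n" where
  "outer u = (\<chi> i j. u $ i * u $ j)"

end

theory Submission
  imports Defs
begin

(*
  A rank-one point \<open>X = u u\<^sup>T\<close>, \<open>u \<in> {-1, 1}\<^sup>n\<close>, is a vertex: the normal cone of the elliptope at \<open>X\<close>,
  which is contained in that of each smaller set, contains \<open>e\<^sub>k e\<^sub>k\<^sup>T\<close> for every \<open>k\<close> and \<open>-w w\<^sup>T\<close> for every
  \<open>w \<bullet> u = 0\<close>, and these matrices span all symmetric matrices.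

  If \<open>rank X \<ge> 2\<close>, some \<open>y\<close> has \<open>(X y)\<^sub>0 = 0\<close> and \<open>X y \<noteq> 0\<close>. A congruence \<open>N(s) X N(s)\<^sup>T\<close>, with \<open>N(s)\<close>
  rotating \<open>e\<^sub>0\<close> towards \<open>y\<close> and the remaining rows adjusted accordingly, gives a curve through \<open>X\<close> that stays
  in the set for small \<open>|s|\<close> and has a nonzero symmetric derivative \<open>B\<close> at \<open>s = 0\<close>. Every normal
  matrix \<open>A\<close> at \<open>X\<close> then satisfies \<open>trace (A B) = 0\<close>, so the normal cone is not full-dimensional.

  Finally a rank-one matrix with unit diagonal has entries \<open>X\<^sub>i\<^sub>j = X\<^sub>i\<^sub>0 X\<^sub>j\<^sub>0\<close> with \<open>X\<^sub>i\<^sub>0 = \<plusminus>1\<close>.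
*)

section \<open>Symmetric and positive semidefinite matrices\<close>

lemma ebas_inner [simp]: "ebas k \<bullet> w = w $ k"
  by (simp add: ebas_def inner_axis')

lemma inner_ebas [simp]: "w \<bullet> ebas k = w $ k"
  by (simp add: ebas_def inner_axis)

lemma matrix_vector_mult_ebas [simp]: "((A::real^'n::finite^'m::finite) *v ebas k) $ l = A $ l $ k"
  by (simp add: ebas_def matrix_vector_mult_def axis_def if_distrib cong: if_cong)

lemma ebas_vector_matrix_mult [simp]: "ebas k v* (A::real^'n::finite^'m::finite) = A $ k"
proof -
  have "(if i = k then 1 else 0) * A$i$j = (if i = k then A$i$j else 0)" for i j by simp
  then show ?thesis by (simp add: ebas_def vec_eq_iff vector_matrix_mult_def axis_def)
qed

lemma sum_mult_ebas: "(\<Sum>j\<in>UNIV. g j * ebas j $ l) = (g l :: real)"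
proof -
  have "g j * ebas j $ l = (if j = l then g j else 0)" for j by (simp add: ebas_def axis_def)
  then show ?thesis by simp
qed

lemma symmetric_matrix_entry: "transpose A = A \<Longrightarrow> A $ i $ j = A $ j $ i"
  by (metis transpose_def vec_lambda_beta)

lemma transpose_add: "transpose (A + B) = transpose A + transpose (B::'a::comm_semiring_1^'n^'m)"
  by (simp add: transpose_def vec_eq_iff)

lemma matrix_add_rdistrib: "(A + B) ** C = A ** C + B ** (C::'a::semiring_1^'p^'n)"
  by (simp add: matrix_matrix_mult_def vec_eq_iff sum.distrib distrib_right)

lemma inner_matrix_vector_commute:
  fixes A :: "real^'n::finite^'n"
  assumes "transpose A = A"
  shows "p \<bullet> (A *v q) = q \<bullet> (A *v p)"
  by (metis assms dot_lmul_matrix inner_commute vector_transpose_matrix)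

lemma psd_symmetric: "psd A \<Longrightarrow> transpose A = A"
  by (simp add: psd_def)

lemma psd_nonneg: "psd A \<Longrightarrow> 0 \<le> x \<bullet> (A *v x)"
  by (simp add: psd_def)

lemma nonneg_quadratic_imp_linear_coeff_zero:
  fixes b c :: real
  assumes "\<And>t. 0 \<le> 2*t*b + t*t*c"
  shows "b = 0"
proof (rule ccontr)
  assume "b \<noteq> 0"
  define m where "m = \<bar>c\<bar> + 1"
  have "m > 0" by (simp add: m_def add_pos_nonneg)
  have "0 \<le> 2*(-b/m)*b + (-b/m)*(-b/m)*c" by (rule assms)
  also have "\<dots> = (b*b / m) * (c / m - 2)"
    using \<open>m > 0\<close> by (simp add: field_simps)
  also have "\<dots> < 0"
    using \<open>b \<noteq> 0\<close> \<open>m > 0\<close>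
    by (intro mult_pos_neg divide_pos_pos) (auto simp: divide_less_eq m_def zero_less_mult_iff)
  finally show False by simp
qed

lemma psd_quadratic_zero_imp_null:
  fixes A :: "real^'n::finite^'n"
  assumes "psd A" "x \<bullet> (A *v x) = 0"
  shows "A *v x = 0"
proof -
  define w where "w = A *v x"
  have "0 \<le> 2*t*(w \<bullet> w) + t*t*(w \<bullet> (A *v w))" for t
  proof -
    have "0 \<le> (x + t *\<^sub>R w) \<bullet> (A *v (x + t *\<^sub>R w))"
      using assms(1) by (rule psd_nonneg)
    also have "\<dots> = x \<bullet> (A *v x) + t * (x \<bullet> (A *v w)) + t * (w \<bullet> (A *v x)) + t*t*(w \<bullet> (A *v w))"
      by (simp add: algebra_simps inner_add_left inner_add_right)
    also have "x \<bullet> (A *v w) = w \<bullet> (A *v x)"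
      using assms(1) by (simp add: psd_symmetric inner_matrix_vector_commute)
    finally show ?thesis using assms(2) by (simp add: w_def)
  qed
  then have "w \<bullet> w = 0" by (rule nonneg_quadratic_imp_linear_coeff_zero)
  then show ?thesis by (simp add: w_def)
qed

lemma congruence_entry:
  fixes N A :: "real^'n::finite^'n"
  shows "(N ** A ** transpose N) $ k $ l = N $ k \<bullet> (A *v N $ l)"
proof -
  have "(N ** A ** transpose N) $ k $ l = (\<Sum>j\<in>UNIV. \<Sum>m\<in>UNIV. N$k$m * A$m$j * N$l$j)"
    by (simp add: matrix_matrix_mult_def transpose_def sum_distrib_right)
  also have "\<dots> = (\<Sum>m\<in>UNIV. \<Sum>j\<in>UNIV. N$k$m * A$m$j * N$l$j)" by (rule sum.swap)
  also have "\<dots> = N$k \<bullet> (A *v N$l)"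
    by (simp add: inner_vec_def matrix_vector_mult_def sum_distrib_left mult.assoc)
  finally show ?thesis .
qed

lemma congruence_quadratic_form:
  fixes N A :: "real^'n::finite^'n"
  shows "p \<bullet> ((N ** A ** transpose N) *v q) = (p v* N) \<bullet> (A *v (q v* N))"
  by (simp add: matrix_vector_mul_assoc[symmetric] dot_lmul_matrix)

lemma psd_congruence:
  fixes N A :: "real^'n::finite^'n"
  assumes "psd A" "0 \<le> c"
  shows "psd (c *\<^sub>R (N ** A ** transpose N))"
  using assms unfolding psd_def
  by (auto simp: transpose_scalar matrix_transpose_mul matrix_mul_assoc congruence_quadratic_form
      scaleR_matrix_vector_assoc[symmetric])

lemma congruence_affine_expansion:
  fixes V A :: "real^'n::finite^'n"
  shows "(c *\<^sub>R mat 1 + s *\<^sub>R V) ** A ** transpose (c *\<^sub>R mat 1 + s *\<^sub>R V)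
    = c\<^sup>2 *\<^sub>R A + (s * c) *\<^sub>R (V ** A + A ** transpose V) + s\<^sup>2 *\<^sub>R (V ** A ** transpose V)"
  by (simp add: transpose_add transpose_scalar matrix_add_ldistrib matrix_add_rdistrib matrix_scalar_ac
      scalar_matrix_assoc[symmetric] matrix_mul_assoc scaleR_add_right power2_eq_square algebra_simps)

lemma trace_mult_eq_sum: "trace ((A::real^'n::finite^'n) ** M) = (\<Sum>k\<in>UNIV. \<Sum>l\<in>UNIV. A$k$l * M$l$k)"
  by (simp add: trace_def matrix_matrix_mult_def)

lemma trace_mult_scaleR_right: "trace ((A::real^'n::finite^'n) ** (c *\<^sub>R M)) = c * trace (A ** M)"
  by (simp add: trace_mult_eq_sum sum_distrib_left mult.left_commute)

lemma trace_uminus_mult: "trace ((- A) ** (M::real^'n::finite^'n)) = - trace (A ** M)"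
  by (simp add: trace_mult_eq_sum sum_negf)

lemma trace_outer_mult:
  fixes M :: "real^'n::finite^'n"
  assumes "transpose M = M"
  shows "trace (outer w ** M) = w \<bullet> (M *v w)"
  by (simp add: trace_mult_eq_sum outer_def inner_vec_def matrix_vector_mult_def sum_distrib_left
      symmetric_matrix_entry[OF assms] mult_ac)

lemma trace_self_mult_pos:
  fixes B :: "real^'n::finite^'n"
  assumes "transpose B = B" "B \<noteq> 0"
  shows "trace (B ** B) > 0"
proof -
  obtain k l where kl: "B$k$l \<noteq> 0" using assms(2) by (metis vec_eq_iff zero_index)
  have "trace (B ** B) = (\<Sum>k\<in>UNIV. \<Sum>l\<in>UNIV. B$k$l * B$k$l)"
    by (simp add: trace_mult_eq_sum symmetric_matrix_entry[OF assms(1)])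
  also have "\<dots> > 0"
  proof (rule sum_pos2[of UNIV k])
    show "0 < (\<Sum>l\<in>UNIV. B$k$l * B$k$l)"
      by (rule sum_pos2[of UNIV l]) (use kl in \<open>auto simp: zero_less_mult_iff\<close>)
  qed (auto simp: sum_nonneg)
  finally show ?thesis .
qed

lemma outer_mult_vector: "outer u *v x = (u \<bullet> x) *\<^sub>R (u::real^'n::finite)"
  by (simp add: vec_eq_iff outer_def matrix_vector_mult_def inner_vec_def sum_distrib_left
      sum_distrib_right mult_ac)

lemma subspace_sym_mats: "subspace (sym_mats :: (real^'n::finite^'n) set)"
  by (auto simp: subspace_def sym_mats_def transpose_def vec_eq_iff)

lemma subspace_sym_mats_trace_orthogonal:
  fixes B :: "real^'n::finite^'n"
  shows "subspace {A \<in> sym_mats. trace (A ** B) = 0}"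
proof -
  have "trace ((A + A') ** B) = trace (A ** B) + trace (A' ** B)" for A A' :: "real^'n^'n"
    by (simp add: trace_mult_eq_sum sum.distrib distrib_right)
  moreover have "trace ((c *\<^sub>R A) ** B) = c * trace (A ** B)" for c and A :: "real^'n^'n"
    by (simp add: trace_mult_eq_sum sum_distrib_left mult.assoc)
  ultimately show ?thesis
    using subspace_sym_mats[where 'n='n] by (auto simp: subspace_def trace_mult_eq_sum)
qed

lemma aff_dim_sym_mats:
  "aff_dim (sym_mats :: (real^'n::finite^'n) set) = int (dim (sym_mats :: (real^'n^'n) set))"
  by (rule aff_dim_subspace[OF subspace_sym_mats])

lemma aff_dim_less_sym_mats:
  fixes S :: "(real^'n::finite^'n) set"
  assumes "S \<subseteq> {A \<in> sym_mats. trace (A ** B) = 0}" "B \<in> sym_mats" "B \<noteq> 0"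
  shows "aff_dim S < aff_dim (sym_mats :: (real^'n^'n) set)"
proof -
  define H where "H = {A \<in> sym_mats. trace (A ** B) = (0::real)}"
  have "subspace H" unfolding H_def by (rule subspace_sym_mats_trace_orthogonal)
  moreover have "B \<notin> H"
    using assms(2,3) trace_self_mult_pos[of B] by (auto simp: H_def sym_mats_def)
  moreover have "H \<subseteq> sym_mats" by (auto simp: H_def)
  ultimately have "span H \<subset> span sym_mats"
    using assms(2) subspace_sym_mats by (metis psubsetI span_eq_iff)
  then have "dim H < dim (sym_mats :: (real^'n^'n) set)" by (rule dim_psubset)
  moreover have "aff_dim S \<le> aff_dim H" using assms(1) unfolding H_def by (rule aff_dim_subset)
  moreover have "aff_dim H = int (dim H)" using \<open>subspace H\<close> by (rule aff_dim_subspace)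
  ultimately show ?thesis by (simp add: aff_dim_sym_mats)
qed

lemma aff_dim_eq_sym_mats:
  fixes S :: "(real^'n::finite^'n) set"
  assumes "S \<subseteq> sym_mats" "0 \<in> S" "sym_mats \<subseteq> span S"
  shows "aff_dim S = aff_dim (sym_mats :: (real^'n^'n) set)"
proof -
  have "aff_dim S = int (dim S)" using assms(2) by (intro aff_dim_zero) (simp add: hull_inc)
  moreover have "dim (sym_mats :: (real^'n^'n) set) \<le> dim S"
    using dim_subset[OF assms(3)] by (simp add: dim_span)
  moreover have "aff_dim S \<le> aff_dim (sym_mats :: (real^'n^'n) set)"
    using assms(1) by (rule aff_dim_subset)
  ultimately show ?thesis by (simp add: aff_dim_sym_mats)
qed

lemma normal_cone_antimono: "C \<subseteq> D \<Longrightarrow> X \<in> C \<Longrightarrow> normal_cone D X \<subseteq> normal_cone C X"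
  by (auto simp: normal_cone_def)

section \<open>Rank-one points are vertices\<close>

definition sym_outer :: "real^'n::finite \<Rightarrow> real^'n \<Rightarrow> real^'n^'n" where
  "sym_outer p q = (\<chi> i j. p$i * q$j + q$i * p$j)"

lemma outer_add: "outer (p + q) = outer p + outer q + sym_outer p q"
  by (simp add: vec_eq_iff outer_def sym_outer_def algebra_simps)

lemma outer_scaleR: "outer (c *\<^sub>R p) = (c * c) *\<^sub>R outer p"
  by (simp add: vec_eq_iff outer_def)

lemma sym_outer_scaleR_right: "sym_outer p (c *\<^sub>R q) = c *\<^sub>R sym_outer p q"
  by (simp add: vec_eq_iff sym_outer_def algebra_simps)

lemma outer_symmetric: "outer u \<in> sym_mats"
  by (simp add: sym_mats_def outer_def transpose_def vec_eq_iff)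

lemma sym_mats_expansion:
  assumes "A \<in> sym_mats"
  shows "A = (\<Sum>i\<in>UNIV. \<Sum>j\<in>UNIV. (A$i$j / 2) *\<^sub>R sym_outer (ebas i) (ebas j))"
proof -
  have "(\<Sum>i\<in>UNIV. \<Sum>j\<in>UNIV. (A$i$j / 2) *\<^sub>R sym_outer (ebas i) (ebas j)) $ k $ l
      = (\<Sum>i\<in>UNIV. \<Sum>j\<in>UNIV. (A$i$j / 2 * ebas i $ k) * ebas j $ l)
        + (\<Sum>i\<in>UNIV. \<Sum>j\<in>UNIV. (A$i$j / 2 * ebas i $ l) * ebas j $ k)" for k l
    by (simp add: sym_outer_def sum.distrib algebra_simps)
  also have "\<dots> k l = A$k$l / 2 + A$l$k / 2" for k l
    by (simp only: sum_mult_ebas)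
  also have "\<dots> k l = A$k$l" for k l
    using assms by (simp add: sym_mats_def symmetric_matrix_entry[of A l k])
  finally show ?thesis by (simp add: vec_eq_iff)
qed

lemma sym_mats_subset_span_outer:
  fixes c :: "'n::finite \<Rightarrow> 'n \<Rightarrow> real"
  assumes "\<And>i j. c i j \<noteq> 0"
  shows "sym_mats \<subseteq>
    span (range (\<lambda>k. outer (ebas k)) \<union> range (\<lambda>(i, j). - outer (ebas i - c i j *\<^sub>R ebas j)))"
    (is "_ \<subseteq> span ?G")
proof -
  have diag: "outer (ebas k) \<in> span ?G" for k by (intro span_base) auto
  have "sym_outer (ebas i) (ebas j) \<in> span ?G" for i j
  proof -
    have "c i j *\<^sub>R sym_outer (ebas i) (ebas j)
        = outer (ebas i) + (c i j * c i j) *\<^sub>R outer (ebas j) + - outer (ebas i - c i j *\<^sub>R ebas j)"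
      using outer_add[of "ebas i" "(- c i j) *\<^sub>R ebas j"]
      by (simp add: outer_scaleR sym_outer_scaleR_right del: scaleR_minus_left) (simp add: algebra_simps)
    then have "sym_outer (ebas i) (ebas j)
        = (1 / c i j) *\<^sub>R (outer (ebas i) + (c i j * c i j) *\<^sub>R outer (ebas j)
            + - outer (ebas i - c i j *\<^sub>R ebas j))"
      using assms[of i j]
      by (metis divide_self_if mult.commute scaleR_one scaleR_scaleR times_divide_eq_right)
    also have "\<dots> \<in> span ?G"
      by (intro span_mul span_add diag span_scale span_base) (auto intro!: image_eqI[of _ _ "(i, j)"])
    finally show ?thesis .
  qed
  then show ?thesis
    using sym_mats_expansion by (metis (no_types, lifting) span_mul span_sum subsetI)
qed

lemma outer_ebas_in_normal_cone_elliptope: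
  assumes "X \<in> elliptope"
  shows "outer (ebas k) \<in> normal_cone elliptope X"
  using assms outer_symmetric
  by (auto simp: normal_cone_def elliptope_def psd_def trace_outer_mult)

lemma neg_outer_in_normal_cone_elliptope:
  assumes "X \<in> elliptope" "w \<bullet> (X *v w) = 0"
  shows "- outer w \<in> normal_cone elliptope X"
  using assms outer_symmetric[of w]
  by (auto simp: normal_cone_def elliptope_def psd_def sym_mats_def trace_uminus_mult trace_outer_mult
      transpose_def vec_eq_iff)

lemma is_vertex_outer_sign_vector:
  assumes "C \<subseteq> elliptope" "X \<in> C" "X = outer u" "\<And>i. u$i * u$i = 1"
  shows "is_vertex C X"
proof -
  have XE: "X \<in> elliptope" using assms(1,2) by blast
  have u_orth: "(u \<bullet> (ebas i - (u$i * u$j) *\<^sub>R ebas j)) = 0" for i j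
    using assms(4)[of j] by (simp add: inner_diff_right algebra_simps)
  have "range (\<lambda>k. outer (ebas k)) \<union> range (\<lambda>(i, j). - outer (ebas i - (u$i * u$j) *\<^sub>R ebas j))
      \<subseteq> normal_cone C X"
    using normal_cone_antimono[OF assms(1,2)] outer_ebas_in_normal_cone_elliptope[OF XE]
      neg_outer_in_normal_cone_elliptope[OF XE] u_orth
    by (auto simp: assms(3) outer_mult_vector)
  then have "sym_mats \<subseteq> span (normal_cone C X)"
    using sym_mats_subset_span_outer[of "\<lambda>i j. u$i * u$j"] assms(4)
    by (metis (no_types, lifting) mult_eq_0_iff span_mono subset_trans zero_neq_one)
  moreover have "0 \<in> normal_cone C X"
    by (simp add: normal_cone_def sym_mats_def trace_mult_eq_sum transpose_def vec_eq_iff)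
  ultimately show ?thesis
    using assms(2) by (auto simp: is_vertex_def normal_cone_def intro!: aff_dim_eq_sym_mats)
qed

lemma rank_1_obtains_factorization:
  fixes A :: "real^'n::finite^'m::finite"
  assumes "rank A = 1"
  obtains w c where "\<And>i j. A $ i $ j = c j * w $ i"
proof -
  have "dim (range ((*v) A)) = 1" using assms by (simp add: rank_dim_range)
  then obtain W where "range ((*v) A) \<subseteq> span W" "card W = 1"
    using basis_exists[of "range ((*v) A)"] by metis
  then obtain w where w: "range ((*v) A) \<subseteq> span {w}" by (metis card_1_singletonE)
  have "\<forall>j. \<exists>c. A *v ebas j = c *\<^sub>R w" using w by (auto simp: span_singleton)
  then obtain c where "\<And>j. A *v ebas j = c j *\<^sub>R w" by metis
  then have "A $ i $ j = c j * w $ i" for i j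
    using matrix_vector_mult_ebas[of A j i] by simp
  then show ?thesis by (rule that)
qed

lemma elliptope_rank_1_eq_outer_lift:
  assumes "X \<in> elliptope" "rank X = 1"
  shows "\<exists>S. S \<subseteq> UNIV - {z} \<and> X = outer (lift_xS z S)"
proof -
  have sym: "X $ i $ j = X $ j $ i" and diag: "X $ i $ i = 1" for i j
    using assms(1) symmetric_matrix_entry[of X] by (auto simp: elliptope_def psd_def)
  obtain w c where wc: "\<And>i j. X $ i $ j = c j * w $ i"
    using rank_1_obtains_factorization[OF assms(2)] by metis
  have factor: "X $ i $ j = X $ i $ z * X $ j $ z" for i j
  proof -
    have "X $ i $ z * X $ j $ z = X $ i $ z * X $ z $ j" by (simp add: sym[of j z])
    also have "\<dots> = X $ i $ j * X $ z $ z" by (simp add: wc mult_ac)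
    finally show ?thesis using diag[of z] by simp
  qed
  have sign: "X $ i $ z = 1 \<or> X $ i $ z = -1" for i
    using factor[of i i] diag[of i] square_eq_1_iff[of "X $ i $ z"] by simp
  define S where "S = {i. i \<noteq> z \<and> X $ i $ z = 1}"
  have "lift_xS z S $ i = X $ i $ z" for i
    using sign[of i] diag[of z] by (auto simp: lift_xS_def S_def)
  then have "X = outer (lift_xS z S)"
    by (simp add: vec_eq_iff outer_def factor[symmetric])
  moreover have "S \<subseteq> UNIV - {z}" by (auto simp: S_def)
  ultimately show ?thesis by blast
qed

section \<open>Points of rank at least two are not vertices\<close>

lemma rank_le_1_if_null_off_coordinate:
  fixes A :: "real^'n::finite^'n"
  assumes "\<And>u. (A *v u) $ z = 0 \<Longrightarrow> A *v u = 0"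
  shows "rank A \<le> 1"
proof -
  obtain w where w: "\<And>u. A *v u \<in> span {w}"
  proof (cases "\<exists>u. (A *v u) $ z \<noteq> 0")
    case True
    then obtain u1 where u1: "(A *v u1) $ z \<noteq> 0" by blast
    have "A *v u \<in> span {A *v u1}" for u
    proof -
      define c where "c = (A *v u) $ z / (A *v u1) $ z"
      have "(A *v (u - c *\<^sub>R u1)) $ z = 0"
        using u1 by (simp add: c_def matrix_vector_mult_diff_distrib matrix_vector_mult_scaleR)
      then have "A *v (u - c *\<^sub>R u1) = 0" by (rule assms)
      then have "A *v u = c *\<^sub>R (A *v u1)"
        by (simp add: matrix_vector_mult_diff_distrib matrix_vector_mult_scaleR)
      then show ?thesis by (simp add: span_mul span_base)
    qed
    then show ?thesis by (rule that)
  next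
    case False
    then show ?thesis using assms that[of 0] by (simp add: span_zero)
  qed
  then have "dim (range ((*v) A)) \<le> dim (span {w})" by (intro dim_subset) auto
  also have "\<dots> \<le> 1" by (simp add: dim_span)
  finally show ?thesis by (simp add: rank_dim_range)
qed

lemma psd_rank_ge_2_obtains_orthogonal_unit:
  fixes A :: "real^'n::finite^'n"
  assumes "psd A" "rank A \<ge> 2"
  obtains y i where "(A *v y) $ z = 0" "y \<bullet> (A *v y) = 1" "(A *v y) $ i \<noteq> 0"
proof -
  obtain u where u: "(A *v u) $ z = 0" "A *v u \<noteq> 0"
    using rank_le_1_if_null_off_coordinate[of A z] assms(2) by force
  then obtain i where i: "(A *v u) $ i \<noteq> 0" by (metis vec_eq_iff zero_index)
  define q where "q = u \<bullet> (A *v u)"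
  have "q \<ge> 0" using assms(1) by (simp add: q_def psd_nonneg)
  moreover have "q \<noteq> 0" using psd_quadratic_zero_imp_null[OF assms(1)] u(2) by (auto simp: q_def)
  ultimately have "q > 0" by simp
  define y where "y = (1 / sqrt q) *\<^sub>R u"
  have Ay: "A *v y = (1 / sqrt q) *\<^sub>R (A *v u)" by (simp add: y_def matrix_vector_mult_scaleR)
  have "y \<bullet> (A *v y) = y \<bullet> ((1 / sqrt q) *\<^sub>R (A *v u))" by (simp only: Ay)
  also have "\<dots> = (1 / sqrt q) * (1 / sqrt q) * q" by (simp add: y_def q_def)
  also have "\<dots> = 1" using \<open>q > 0\<close> by (simp add: real_sqrt_mult[symmetric])
  finally have "y \<bullet> (A *v y) = 1" .
  moreover have "(A *v y) $ z = 0" "(A *v y) $ i \<noteq> 0" using u(1) i \<open>q > 0\<close> by (simp_all add: Ay)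
  ultimately show ?thesis using that by blast
qed

lemma linear_coeff_zero_if_eventually_nonpos:
  fixes b d :: real
  assumes "\<forall>\<^sub>F s in at 0. s * (1 - s\<^sup>2) * b + s\<^sup>2 * d \<le> 0"
  shows "b = 0"
proof -
  define f where "f s = (1 - s\<^sup>2) * b + s * d" for s :: real
  have "(f \<longlongrightarrow> b) (at 0)"
    unfolding f_def by (rule tendsto_eq_intros refl | simp)+
  then have lim_right: "(f \<longlongrightarrow> b) (at_right 0)" and lim_left: "(f \<longlongrightarrow> b) (at_left 0)"
    by (simp_all add: filterlim_at_split)
  have factor: "s * (1 - s\<^sup>2) * b + s\<^sup>2 * d = s * f s" for s
    by (simp add: f_def power2_eq_square algebra_simps)
  have right: "\<forall>\<^sub>F s in at_right 0. s * f s \<le> 0" and left: "\<forall>\<^sub>F s in at_left 0. s * f s \<le> 0"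
    using assms by (simp_all add: eventually_at_split factor)
  have "\<forall>\<^sub>F s in at_right 0. f s \<le> 0"
    using right eventually_at_right_less[of "0::real"] by eventually_elim (simp add: mult_le_0_iff)
  then have "b \<le> 0" using lim_right by (intro tendsto_upperbound) auto
  moreover have "\<forall>\<^sub>F s in at_left 0. f s \<ge> 0"
  proof -
    have "\<forall>\<^sub>F s in at_left 0. s < (0::real)"
      using eventually_at_left_real[of "-1" 0] by (auto elim: eventually_mono)
    with left show ?thesis by eventually_elim (simp add: mult_le_0_iff)
  qed
  then have "b \<ge> 0" using lim_left by (intro tendsto_lowerbound) auto
  ultimately show ?thesis by simp
qed

text \<open>For \<open>X\<close> of rank at least two we deform \<open>X\<close> by congruence. Row \<open>z\<close> of \<open>transform s\<close>
  rotates \<open>e\<^sub>z\<close> towards \<open>y\<close>, which is \<open>X\<close>-orthonormal to it; every other row \<open>k\<close> is chosen so that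
  \<open>dir k\<close> is a left eigenvector of \<open>transform s\<close> while \<open>row \<bullet> (X *v row) = (1 + s\<^sup>2)\<^sup>2\<close> for every row.
  So \<open>curve s\<close> stays in the elliptope and multiplies each constraint
  \<open>(e\<^sub>z + \<sigma> e\<^sub>i)\<^sup>T Y (e\<^sub>z + \<sigma> e\<^sub>j) \<ge> 0\<close> (\<open>\<sigma> = \<plusminus>1\<close>) by a factor that is positive for small \<open>s\<close>,
  while its derivative \<open>tangent\<close> at \<open>s = 0\<close> is nonzero.\<close>
locale elliptope_curve =
  fixes X :: "real^'n::finite^'n" and z :: 'n and \<sigma> :: real and y :: "real^'n"
  assumes psd: "psd X" and diag: "\<And>i. X $ i $ i = 1" and sigma_sq: "\<sigma> * \<sigma> = 1"
    and y_orth: "(X *v y) $ z = 0" and y_unit: "y \<bullet> (X *v y) = 1"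
begin

definition dir :: "'n \<Rightarrow> real^'n" where
  "dir k = ebas z + \<sigma> *\<^sub>R ebas k"

definition kappa :: "'n \<Rightarrow> real" where
  "kappa k = 4 * \<sigma> * (X *v y) $ k / (dir k \<bullet> (X *v dir k))"

definition velocity :: "real^'n^'n" where
  "velocity = (\<chi> k. if k = z then 2 *\<^sub>R y else \<sigma> *\<^sub>R (kappa k *\<^sub>R dir k - 2 *\<^sub>R y))"

definition transform :: "real \<Rightarrow> real^'n^'n" where
  "transform s = (1 - s\<^sup>2) *\<^sub>R mat 1 + s *\<^sub>R velocity"

definition curve :: "real \<Rightarrow> real^'n^'n" where
  "curve s = (1 / (1 + s\<^sup>2)\<^sup>2) *\<^sub>R (transform s ** X ** transpose (transform s))"

definition tangent :: "real^'n^'n" where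
  "tangent = velocity ** X + X ** transpose velocity"

definition dir_scale :: "real \<Rightarrow> 'n \<Rightarrow> real" where
  "dir_scale s k = 1 - s\<^sup>2 + s * kappa k"

lemma X_symmetric: "transpose X = X"
  using psd by (rule psd_symmetric)

lemma inner_X_commute: "p \<bullet> (X *v q) = q \<bullet> (X *v p)"
  using X_symmetric by (rule inner_matrix_vector_commute)

lemma dir_norm: "k \<noteq> z \<Longrightarrow> dir k \<bullet> (X *v dir k) = 2 + 2 * \<sigma> * X $ k $ z"
  using diag sigma_sq symmetric_matrix_entry[OF X_symmetric, of z k]
  by (simp add: dir_def algebra_simps)

lemma dir_X_ebas_z: "dir k \<bullet> (X *v ebas z) = 1 + \<sigma> * X $ k $ z"
  using diag by (simp add: dir_def algebra_simps)

lemma dir_X_y: "dir k \<bullet> (X *v y) = \<sigma> * (X *v y) $ k"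
  using y_orth by (simp add: dir_def algebra_simps)

text \<open>When \<open>dir k \<bullet> (X *v dir k) = 0\<close>, \<open>kappa k = 0\<close> by division by zero; the identity still holds
  because then \<open>X *v dir k = 0\<close>.\<close>
lemma kappa_mult_dir_norm: "kappa k * (dir k \<bullet> (X *v dir k)) = 4 * \<sigma> * (X *v y) $ k"
proof (cases "dir k \<bullet> (X *v dir k) = 0")
  case True
  then have "X *v dir k = 0" by (rule psd_quadratic_zero_imp_null[OF psd])
  then have "\<sigma> * (X *v y) $ k = 0" using dir_X_y inner_X_commute[of "dir k" y] by simp
  then show ?thesis using True by simp
qed (simp add: kappa_def)

lemma transform_row: "transform s $ k = (1 - s\<^sup>2) *\<^sub>R ebas k + s *\<^sub>R velocity $ k"
  by (simp add: transform_def vec_eq_iff mat_def ebas_def axis_def)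

lemma transform_row_z: "transform s $ z = (1 - s\<^sup>2) *\<^sub>R ebas z + (2 * s) *\<^sub>R y"
  by (simp add: transform_row velocity_def)

lemma transform_row_off_z: "k \<noteq> z \<Longrightarrow> transform s $ k = \<sigma> *\<^sub>R (dir_scale s k *\<^sub>R dir k - transform s $ z)"
  using sigma_sq
  by (simp add: vec_eq_iff transform_row transform_row_z velocity_def dir_def dir_scale_def algebra_simps)

lemma transform_row_z_norm: "transform s $ z \<bullet> (X *v transform s $ z) = (1 + s\<^sup>2)\<^sup>2"
proof -
  have "ebas z \<bullet> (X *v y) = 0" "y \<bullet> (X *v ebas z) = 0"
    using y_orth inner_X_commute[of y "ebas z"] by simp_all
  then show ?thesis
    using diag[of z] y_unit by (simp add: transform_row_z algebra_simps power2_eq_square)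
qed

lemma dir_X_transform_row_z:
  "dir k \<bullet> (X *v transform s $ z) = (1 - s\<^sup>2) * (1 + \<sigma> * X $ k $ z) + 2 * s * \<sigma> * (X *v y) $ k"
  using dir_X_ebas_z[of k] dir_X_y[of k] by (simp add: transform_row_z algebra_simps)

text \<open>The choice of \<open>kappa\<close> is exactly what makes the rows keep a constant norm.\<close>
lemma transform_row_norm: "transform s $ k \<bullet> (X *v transform s $ k) = (1 + s\<^sup>2)\<^sup>2"
proof (cases "k = z")
  case False
  define g where "g = dir k \<bullet> (X *v dir k)"
  define m where "m = dir_scale s k"
  have "transform s $ k \<bullet> (X *v transform s $ k)
      = (\<sigma> * \<sigma>) * (m * m * g - 2 * m * (dir k \<bullet> (X *v transform s $ z)) + transform s $ z \<bullet> (X *v transform s $ z))"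
    using inner_X_commute[of "transform s $ z" "dir k"]
    by (simp add: transform_row_off_z[OF False] m_def g_def algebra_simps inner_diff_left inner_diff_right)
  also have "\<dots> = m * s * (kappa k * g - 4 * \<sigma> * (X *v y) $ k) + (1 + s\<^sup>2)\<^sup>2"
    using sigma_sq by (simp add: dir_X_transform_row_z transform_row_z_norm m_def g_def dir_norm[OF False]
        dir_scale_def algebra_simps power2_eq_square)
  also have "\<dots> = (1 + s\<^sup>2)\<^sup>2" by (simp add: g_def kappa_mult_dir_norm)
  finally show ?thesis .
qed (simp add: transform_row_z_norm)

lemma dir_vector_matrix_transform: "k \<noteq> z \<Longrightarrow> dir k v* transform s = dir_scale s k *\<^sub>R dir k"
  using sigma_sq
  by (simp add: dir_def vector_matrix_left_distrib scaleR_vector_matrix_assoc transform_row_off_z)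

lemma curve_in_elliptope: "curve s \<in> elliptope"
proof -
  have "1 + s\<^sup>2 > 0" by (simp add: add_pos_nonneg)
  then have "curve s $ k $ k = 1" for k
    by (simp add: curve_def congruence_entry transform_row_norm)
  moreover have "psd (curve s)" unfolding curve_def by (rule psd_congruence[OF psd]) simp
  ultimately show ?thesis by (simp add: elliptope_def)
qed

lemma dir_curve_dir:
  assumes "i \<noteq> z" "j \<noteq> z"
  shows "dir i \<bullet> (curve s *v dir j) = dir_scale s i * dir_scale s j * (dir i \<bullet> (X *v dir j)) / (1 + s\<^sup>2)\<^sup>2"
  by (simp add: curve_def scaleR_matrix_vector_assoc[symmetric] congruence_quadratic_form
      dir_vector_matrix_transform assms matrix_vector_mult_scaleR)

lemma eventually_dir_scale_pos: "\<forall>\<^sub>F s in at 0. \<forall>k. dir_scale s k > 0"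
proof -
  have "((\<lambda>s. dir_scale s k) \<longlongrightarrow> 1) (at 0)" for k
    unfolding dir_scale_def by (rule tendsto_eq_intros refl | simp)+
  then have "\<forall>\<^sub>F s in at 0. dir_scale s k > 0" for k
    by (rule order_tendstoD(1)) simp
  then show ?thesis by (simp add: eventually_all_finite)
qed

lemma eventually_curve_preserves_dir_constraint:
  "\<forall>\<^sub>F s in at 0. \<forall>i j. i \<noteq> z \<longrightarrow> j \<noteq> z \<longrightarrow> 0 \<le> dir i \<bullet> (X *v dir j) \<longrightarrow>
      0 \<le> dir i \<bullet> (curve s *v dir j)"
  using eventually_dir_scale_pos
  by eventually_elim (auto simp: dir_curve_dir less_imp_le intro!: divide_nonneg_nonneg mult_nonneg_nonneg)

lemma tangent_symmetric: "tangent \<in> sym_mats"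
  by (simp add: sym_mats_def tangent_def transpose_add matrix_transpose_mul X_symmetric add.commute)

lemma transform_congruence_expansion:
  "transform s ** X ** transpose (transform s)
    = (1 - s\<^sup>2)\<^sup>2 *\<^sub>R X + (s * (1 - s\<^sup>2)) *\<^sub>R tangent + s\<^sup>2 *\<^sub>R (velocity ** X ** transpose velocity)"
  unfolding transform_def tangent_def by (rule congruence_affine_expansion)

lemma tangent_orthogonal:
  assumes "\<forall>\<^sub>F s in at 0. trace (A ** curve s) \<le> trace (A ** X)"
  shows "trace (A ** tangent) = 0"
proof (rule linear_coeff_zero_if_eventually_nonpos)
  define T where "T = trace (A ** (velocity ** X ** transpose velocity))"
  show "\<forall>\<^sub>F s in at 0. s * (1 - s\<^sup>2) * trace (A ** tangent) + s\<^sup>2 * (T - 4 * trace (A ** X)) \<le> 0"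
    using assms
  proof eventually_elim
    case (elim s)
    have "1 + s\<^sup>2 > 0" by (simp add: add_pos_nonneg)
    with elim have "trace (A ** (transform s ** X ** transpose (transform s))) \<le> (1 + s\<^sup>2)\<^sup>2 * trace (A ** X)"
      by (simp add: curve_def trace_mult_scaleR_right field_simps)
    moreover have "trace (A ** (transform s ** X ** transpose (transform s)))
        = (1 - s\<^sup>2)\<^sup>2 * trace (A ** X) + (s * (1 - s\<^sup>2)) * trace (A ** tangent) + s\<^sup>2 * T"
      by (simp add: transform_congruence_expansion matrix_add_ldistrib trace_add trace_mult_scaleR_right T_def)
    moreover have "(1 + s\<^sup>2)\<^sup>2 = (1 - s\<^sup>2)\<^sup>2 + 4 * s\<^sup>2" by (simp add: power2_eq_square algebra_simps)
    ultimately show ?case by (simp add: algebra_simps)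
  qed
qed

lemma tangent_entry_z:
  assumes "i \<noteq> z"
  shows "tangent $ i $ z = 4 * (X *v y) $ i"
proof -
  have "(velocity ** X) $ i $ z = velocity $ i \<bullet> (X *v ebas z)"
    by (simp add: matrix_matrix_mult_def inner_vec_def)
  also have "\<dots> = \<sigma> * kappa i * (dir i \<bullet> (X *v dir i)) / 2"
    using assms y_orth inner_X_commute[of y "ebas z"]
    by (simp add: velocity_def dir_X_ebas_z dir_norm algebra_simps)
  also have "\<dots> = 2 * (X *v y) $ i"
    using sigma_sq by (simp add: kappa_mult_dir_norm mult.assoc)
  finally have "(velocity ** X) $ i $ z = 2 * (X *v y) $ i" .
  moreover have "(X ** transpose velocity) $ i $ z = 2 * (X *v y) $ i"
    by (simp add: matrix_matrix_mult_def matrix_vector_mult_def transpose_def velocity_def sum_distrib_left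
        mult.left_commute)
  ultimately show ?thesis by (simp add: tangent_def)
qed

lemma tangent_nonzero: "(X *v y) $ i \<noteq> 0 \<Longrightarrow> tangent \<noteq> 0"
  using tangent_entry_z[of i] y_orth by (cases "i = z") auto

end

definition sign_constrained_elliptope ::
    "'n::finite \<Rightarrow> real \<Rightarrow> ('n \<Rightarrow> 'n \<Rightarrow> bool) \<Rightarrow> (real^'n^'n) set" where
  "sign_constrained_elliptope z \<sigma> P = {Y \<in> elliptope. \<forall>i j. P i j \<longrightarrow>
      0 \<le> (ebas z + \<sigma> *\<^sub>R ebas i) \<bullet> (Y *v (ebas z + \<sigma> *\<^sub>R ebas j))}"

lemma elliptope_variant_obtains_sign_constraints:
  assumes "C \<in> {elliptope, elliptope' z, elliptope'' z}"
  obtains \<sigma> :: real and P where "\<sigma> * \<sigma> = 1" "\<And>i j. P i j \<Longrightarrow> i \<noteq> z \<and> j \<noteq> z"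
    "C = sign_constrained_elliptope z \<sigma> P"
proof -
  let ?P = "\<lambda>i j. i \<noteq> z \<and> j \<noteq> z \<and> i \<noteq> j"
  consider "C = elliptope" | "C = elliptope' z" | "C = elliptope'' z" using assms by blast
  then show ?thesis
  proof cases
    case 1
    then show ?thesis by (intro that[of 1 "\<lambda>_ _. False"]) (auto simp: sign_constrained_elliptope_def)
  next
    case 2
    then show ?thesis
      by (intro that[of 1 ?P]) (auto simp: elliptope'_def sign_constrained_elliptope_def)
  next
    case 3
    then show ?thesis
      by (intro that[of "-1" ?P]) (auto simp: elliptope''_def sign_constrained_elliptope_def)
  qed
qed

lemma not_is_vertex_if_rank_ge_2:
  fixes z :: "'n::finite"
  assumes "C \<in> {elliptope, elliptope' z, elliptope'' z}" "X \<in> C" "rank X \<ge> 2"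
  shows "\<not> is_vertex C X"
proof -
  obtain \<sigma> :: real and P where sigma: "\<sigma> * \<sigma> = 1" and P: "\<And>i j. P i j \<Longrightarrow> i \<noteq> z \<and> j \<noteq> z"
    and C: "C = sign_constrained_elliptope z \<sigma> P"
    using elliptope_variant_obtains_sign_constraints[OF assms(1)] by blast
  have "X \<in> elliptope" using assms(2) by (simp add: C sign_constrained_elliptope_def)
  then have psd: "psd X" and diag: "\<And>i. X $ i $ i = 1" by (auto simp: elliptope_def)
  obtain y i where y: "(X *v y) $ z = 0" "y \<bullet> (X *v y) = 1" "(X *v y) $ i \<noteq> 0"
    using psd_rank_ge_2_obtains_orthogonal_unit[OF psd assms(3)] by blast
  interpret elliptope_curve X z \<sigma> y
    using psd diag sigma y(1,2) by unfold_locales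
  have "\<forall>\<^sub>F s in at 0. curve s \<in> C"
    using eventually_curve_preserves_dir_constraint
    by eventually_elim (use assms(2) P curve_in_elliptope in \<open>auto simp: C sign_constrained_elliptope_def dir_def\<close>)
  then have "normal_cone C X \<subseteq> {A \<in> sym_mats. trace (A ** tangent) = 0}"
    by (auto simp: normal_cone_def intro!: tangent_orthogonal elim!: eventually_mono)
  then have "aff_dim (normal_cone C X) < aff_dim (sym_mats :: (real^'n^'n) set)"
    using aff_dim_less_sym_mats tangent_symmetric tangent_nonzero[OF y(3)] by blast
  then show ?thesis by (simp add: is_vertex_def)
qed

theorem corollary3p4:
  fixes z :: "'n::finite" and C :: "(real^'n^'n) set" and X :: "real^'n^'n"
  assumes "C \<in> {elliptope, elliptope' z, elliptope'' z}"
    and "X \<in> C"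
  shows "(is_vertex C X \<longleftrightarrow> rank X = 1)
    \<and> (is_vertex C X \<longleftrightarrow> (\<exists>S. S \<subseteq> UNIV - {z} \<and> X = outer (lift_xS z S)))"
proof -
  have C_sub: "C \<subseteq> elliptope" using assms(1) by (auto simp: elliptope'_def elliptope''_def)
  then have X: "X \<in> elliptope" using assms(2) by blast
  have "rank X \<noteq> 0" using X by (auto simp: rank_eq_0 elliptope_def)
  then have vertex_rank: "is_vertex C X \<Longrightarrow> rank X = 1"
    using not_is_vertex_if_rank_ge_2[OF assms] by fastforce
  have lift_vertex: "is_vertex C X" if "X = outer (lift_xS z S)" for S
    using is_vertex_outer_sign_vector[OF C_sub assms(2) that] by (simp add: lift_xS_def)
  show ?thesis
    using vertex_rank lift_vertex elliptope_rank_1_eq_outer_lift[OF X] by blast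
qed

end
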